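(* Let $R_1,R_2$ be rings and $M$ an $(R_1,R_2)$-bimodule. The formal triangular matrix ring $\begin{pmatrix} R_1 & M\\ 0 & R_2\end{pmatrix}$ is NJ-symmetric if and only if $R_1$ and $R_2$ are NJ-symmetric.
   Context: Rings are associative with identity. $N(S)$ is the set of nilpotent elements, $J(S)$ the Jacobson radical of a ring $S$. $S$ is NJ-symmetric if for all $a,b,c\in S$, $abc\in N(S)$ implies $bac\in J(S)$. *)

theory Defs
  imports "HOL-Algebra.Algebra"
begin

definition nilpotents :: "('a, 'b) ring_scheme \<Rightarrow> 'a set" where
  "nilpotents S = {a \<in> carrier S. \<exists>n::nat. a [^]\<^bsub>S\<^esub> n = \<zero>\<^bsub>S\<^esub>}"

definition left_ideal :: "'a set \<Rightarrow> ('a, 'b) ring_scheme \<Rightarrow> bool" where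
  "left_ideal I S \<longleftrightarrow> additive_subgroup I S \<and>
     (\<forall>r\<in>carrier S. \<forall>x\<in>I. r \<otimes>\<^bsub>S\<^esub> x \<in> I)"

definition maximal_left_ideal :: "'a set \<Rightarrow> ('a, 'b) ring_scheme \<Rightarrow> bool" where
  "maximal_left_ideal I S \<longleftrightarrow> left_ideal I S \<and> I \<noteq> carrier S \<and>
     (\<forall>J. left_ideal J S \<and> I \<subseteq> J \<longrightarrow> J = I \<or> J = carrier S)"

definition jacobson_radical :: "('a, 'b) ring_scheme \<Rightarrow> 'a set" where
  "jacobson_radical S = carrier S \<inter> \<Inter>{I. maximal_left_ideal I S}"

definition NJ_symmetric :: "('a, 'b) ring_scheme \<Rightarrow> bool" where
  "NJ_symmetric S \<longleftrightarrow> (\<forall>a\<in>carrier S. \<forall>b\<in>carrier S. \<forall>c\<in>carrier S.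
     a \<otimes>\<^bsub>S\<^esub> b \<otimes>\<^bsub>S\<^esub> c \<in> nilpotents S \<longrightarrow>
     b \<otimes>\<^bsub>S\<^esub> a \<otimes>\<^bsub>S\<^esub> c \<in> jacobson_radical S)"

text \<open>(R1,R2)-bimodule: abelian group M (additive structure of M) with a left R1-action
  l and a right R2-action r, unital, biadditive, associative, and compatible.\<close>
definition bimodule ::
  "('a, 'c) ring_scheme \<Rightarrow> ('m, 'd) ring_scheme \<Rightarrow> ('b, 'e) ring_scheme \<Rightarrow>
   ('a \<Rightarrow> 'm \<Rightarrow> 'm) \<Rightarrow> ('m \<Rightarrow> 'b \<Rightarrow> 'm) \<Rightarrow> bool" where
  "bimodule R1 M R2 l r \<longleftrightarrow> ring R1 \<and> ring R2 \<and> abelian_group M \<and>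
    (\<forall>x\<in>carrier R1. \<forall>m\<in>carrier M. l x m \<in> carrier M) \<and>
    (\<forall>m\<in>carrier M. \<forall>y\<in>carrier R2. r m y \<in> carrier M) \<and>
    (\<forall>x\<in>carrier R1. \<forall>m\<in>carrier M. \<forall>n\<in>carrier M. l x (m \<oplus>\<^bsub>M\<^esub> n) = l x m \<oplus>\<^bsub>M\<^esub> l x n) \<and>
    (\<forall>x\<in>carrier R1. \<forall>x'\<in>carrier R1. \<forall>m\<in>carrier M. l (x \<oplus>\<^bsub>R1\<^esub> x') m = l x m \<oplus>\<^bsub>M\<^esub> l x' m) \<and>
    (\<forall>x\<in>carrier R1. \<forall>x'\<in>carrier R1. \<forall>m\<in>carrier M. l (x \<otimes>\<^bsub>R1\<^esub> x') m = l x (l x' m)) \<and>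
    (\<forall>m\<in>carrier M. l \<one>\<^bsub>R1\<^esub> m = m) \<and>
    (\<forall>m\<in>carrier M. \<forall>n\<in>carrier M. \<forall>y\<in>carrier R2. r (m \<oplus>\<^bsub>M\<^esub> n) y = r m y \<oplus>\<^bsub>M\<^esub> r n y) \<and>
    (\<forall>m\<in>carrier M. \<forall>y\<in>carrier R2. \<forall>y'\<in>carrier R2. r m (y \<oplus>\<^bsub>R2\<^esub> y') = r m y \<oplus>\<^bsub>M\<^esub> r m y') \<and>
    (\<forall>m\<in>carrier M. \<forall>y\<in>carrier R2. \<forall>y'\<in>carrier R2. r m (y \<otimes>\<^bsub>R2\<^esub> y') = r (r m y) y') \<and>
    (\<forall>m\<in>carrier M. r m \<one>\<^bsub>R2\<^esub> = m) \<and>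
    (\<forall>x\<in>carrier R1. \<forall>m\<in>carrier M. \<forall>y\<in>carrier R2. r (l x m) y = l x (r m y))"

text \<open>Formal triangular matrix ring [[R1, M], [0, R2]], elements (a, m, b).\<close>
definition tri_ring ::
  "('a, 'c) ring_scheme \<Rightarrow> ('m, 'd) ring_scheme \<Rightarrow> ('b, 'e) ring_scheme \<Rightarrow>
   ('a \<Rightarrow> 'm \<Rightarrow> 'm) \<Rightarrow> ('m \<Rightarrow> 'b \<Rightarrow> 'm) \<Rightarrow> ('a \<times> 'm \<times> 'b) ring" where
  "tri_ring R1 M R2 l r =
    \<lparr>carrier = carrier R1 \<times> carrier M \<times> carrier R2,
     monoid.mult = (\<lambda>(a, m, b) (a', m', b').
        (a \<otimes>\<^bsub>R1\<^esub> a', l a m' \<oplus>\<^bsub>M\<^esub> r m b', b \<otimes>\<^bsub>R2\<^esub> b')),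
     monoid.one = (\<one>\<^bsub>R1\<^esub>, \<zero>\<^bsub>M\<^esub>, \<one>\<^bsub>R2\<^esub>),
     ring.zero = (\<zero>\<^bsub>R1\<^esub>, \<zero>\<^bsub>M\<^esub>, \<zero>\<^bsub>R2\<^esub>),
     ring.add = (\<lambda>(a, m, b) (a', m', b'). (a \<oplus>\<^bsub>R1\<^esub> a', m \<oplus>\<^bsub>M\<^esub> m', b \<oplus>\<^bsub>R2\<^esub> b'))\<rparr>"

end

theory Submission
  imports Defs
begin

text \<open>An element x lies in the Jacobson radical iff every 1 + r x is left invertible.
  Multiplication in T = [[R1, M], [0, R2]] multiplies diagonal entries componentwise, and an
  element of T whose diagonal entries are left invertible is itself left invertible, so
  J(T) = J(R1) \<times> M \<times> J(R2). If a^p = 0 and b^q = 0 then (a, m, b)^(p+q) =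
  (0, _, _)(_, _, 0) = 0, so N(T) consists of the elements with nilpotent diagonal. Thus both
  conditions in NJ-symmetry of T only see the diagonal, and the corner elements (a, 0, 0) and
  (0, 0, b) transfer NJ-symmetry from T to R1 and R2.\<close>

context ring
begin

lemma left_idealI:
  assumes "I \<subseteq> carrier R" "\<zero> \<in> I"
    and "\<And>x y. x \<in> I \<Longrightarrow> y \<in> I \<Longrightarrow> x \<oplus> y \<in> I"
    and "\<And>x. x \<in> I \<Longrightarrow> \<ominus> x \<in> I"
    and "\<And>s x. s \<in> carrier R \<Longrightarrow> x \<in> I \<Longrightarrow> s \<otimes> x \<in> I"
  shows "left_ideal I R"
  using assms unfolding left_ideal_def
  by (auto intro!: additive_subgroup.intro subgroup.intro simp: a_inv_def)

lemma left_ideal_carrier: "left_ideal I R \<Longrightarrow> I \<subseteq> carrier R"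
  and left_ideal_zero: "left_ideal I R \<Longrightarrow> \<zero> \<in> I"
  and left_ideal_add: "left_ideal I R \<Longrightarrow> x \<in> I \<Longrightarrow> y \<in> I \<Longrightarrow> x \<oplus> y \<in> I"
  and left_ideal_neg: "left_ideal I R \<Longrightarrow> x \<in> I \<Longrightarrow> \<ominus> x \<in> I"
  and left_ideal_mult: "left_ideal I R \<Longrightarrow> s \<in> carrier R \<Longrightarrow> x \<in> I \<Longrightarrow> s \<otimes> x \<in> I"
  unfolding left_ideal_def
  by (auto simp: additive_subgroup.a_subset additive_subgroup.zero_closed
      additive_subgroup.a_closed additive_subgroup.a_inv_closed)

lemma left_ideal_eq_carrier_if_one:
  assumes "left_ideal I R" "\<one> \<in> I"
  shows "I = carrier R"
proof
  show "I \<subseteq> carrier R" using assms(1) by (rule left_ideal_carrier)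
  show "carrier R \<subseteq> I"
    using left_ideal_mult[OF assms(1) _ assms(2)] by (metis r_one subsetI)
qed

lemma left_ideal_Union_chain:
  assumes "C \<noteq> {}" "subset.chain {I. left_ideal I R} C"
  shows "left_ideal (\<Union>C) R"
proof (rule left_idealI)
  have ideals: "\<And>I. I \<in> C \<Longrightarrow> left_ideal I R"
    and comparable: "\<And>I J. I \<in> C \<Longrightarrow> J \<in> C \<Longrightarrow> I \<subseteq> J \<or> J \<subseteq> I"
    using assms(2) by (auto simp: subset_chain_def)
  show "\<Union>C \<subseteq> carrier R" using ideals left_ideal_carrier by blast
  show "\<zero> \<in> \<Union>C" using assms(1) ideals left_ideal_zero by blast
  show "x \<oplus> y \<in> \<Union>C" if xy: "x \<in> \<Union>C" "y \<in> \<Union>C" for x y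
  proof -
    obtain I J where "I \<in> C" "J \<in> C" "x \<in> I" "y \<in> J" using xy by blast
    then show ?thesis using comparable[of I J] ideals left_ideal_add by (metis UnionI subsetD)
  qed
  show "\<ominus> x \<in> \<Union>C" if "x \<in> \<Union>C" for x
    using that ideals left_ideal_neg by blast
  show "s \<otimes> x \<in> \<Union>C" if "s \<in> carrier R" "x \<in> \<Union>C" for s x
    using that ideals left_ideal_mult by blast
qed

lemma exists_maximal_left_ideal:
  assumes "left_ideal I R" "\<one> \<notin> I"
  obtains L where "maximal_left_ideal L R" "I \<subseteq> L"
proof -
  define A where "A = {J. left_ideal J R \<and> I \<subseteq> J \<and> \<one> \<notin> J}"
  have "\<Union>C \<in> A" if C: "C \<noteq> {}" "subset.chain A C" for C
  proof -
    have "C \<subseteq> A" using C(2) by (simp add: subset_chain_def)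
    have "subset.chain {J. left_ideal J R} C"
      using C(2) by (auto simp: subset_chain_def A_def)
    then have "left_ideal (\<Union>C) R" using C(1) by (intro left_ideal_Union_chain)
    moreover have "I \<subseteq> \<Union>C" "\<one> \<notin> \<Union>C" using \<open>C \<subseteq> A\<close> C(1) A_def by auto
    ultimately show ?thesis by (simp add: A_def)
  qed
  moreover have "A \<noteq> {}" using assms A_def by blast
  ultimately obtain L where L: "L \<in> A" and max: "\<And>J. J \<in> A \<Longrightarrow> L \<subseteq> J \<Longrightarrow> J = L"
    using subset_Zorn_nonempty[of A] by blast
  have "maximal_left_ideal L R"
    unfolding maximal_left_ideal_def
  proof (intro conjI allI impI)
    show "left_ideal L R" "L \<noteq> carrier R" using L A_def by auto
    show "J = L \<or> J = carrier R" if "left_ideal J R \<and> L \<subseteq> J" for J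
      using that max[of J] L left_ideal_eq_carrier_if_one unfolding A_def by blast
  qed
  then show ?thesis using that L A_def by blast
qed

lemma left_ideal_principal:
  assumes y: "y \<in> carrier R"
  shows "left_ideal {s \<otimes> y | s. s \<in> carrier R} R"
    (is "left_ideal ?L R")
proof (rule left_idealI)
  show "?L \<subseteq> carrier R" using y by auto
  show "\<zero> \<in> ?L" using y by (auto intro!: exI[of _ \<zero>])
  show "a \<oplus> b \<in> ?L" if ab: "a \<in> ?L" "b \<in> ?L" for a b
  proof -
    obtain s t where "s \<in> carrier R" "t \<in> carrier R" "a \<oplus> b = (s \<oplus> t) \<otimes> y"
      using ab y by (auto simp: l_distr)
    then show ?thesis by blast
  qed
  show "\<ominus> a \<in> ?L" if a: "a \<in> ?L" for a
  proof -
    obtain s where "s \<in> carrier R" "\<ominus> a = (\<ominus> s) \<otimes> y"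
      using a y by (auto simp: l_minus)
    then show ?thesis by blast
  qed
  show "t \<otimes> a \<in> ?L" if t: "t \<in> carrier R" and a: "a \<in> ?L" for t a
  proof -
    obtain s where "s \<in> carrier R" "t \<otimes> a = (t \<otimes> s) \<otimes> y"
      using a t y by (auto simp: m_assoc)
    then show ?thesis using t by blast
  qed
qed

lemma left_ideal_add_principal:
  assumes I: "left_ideal I R" and x: "x \<in> carrier R"
  shows "left_ideal {i \<oplus> s \<otimes> x | i s. i \<in> I \<and> s \<in> carrier R} R"
    (is "left_ideal ?K R")
proof (rule left_idealI)
  have I_carrier: "I \<subseteq> carrier R" using I by (rule left_ideal_carrier)
  show "?K \<subseteq> carrier R" using I_carrier x by auto
  show "\<zero> \<in> ?K"
    using I x left_ideal_zero by (auto intro!: exI[of _ \<zero>])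
  show "a \<oplus> b \<in> ?K" if ab: "a \<in> ?K" "b \<in> ?K" for a b
  proof -
    obtain i s j t where ij: "i \<in> I" "s \<in> carrier R" "j \<in> I" "t \<in> carrier R"
      and "a = i \<oplus> s \<otimes> x" "b = j \<oplus> t \<otimes> x"
      using ab by auto
    then have "a \<oplus> b = (i \<oplus> j) \<oplus> (s \<oplus> t) \<otimes> x"
      using x I_carrier by (simp add: l_distr a_ac subsetD)
    then show ?thesis using ij I left_ideal_add by blast
  qed
  show "\<ominus> a \<in> ?K" if a: "a \<in> ?K" for a
  proof -
    obtain i s where i_s: "i \<in> I" "s \<in> carrier R" and "a = i \<oplus> s \<otimes> x" using a by auto
    then have "\<ominus> a = \<ominus> i \<oplus> (\<ominus> s) \<otimes> x"
      using x I_carrier by (simp add: l_minus minus_add subsetD)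
    then show ?thesis using i_s I left_ideal_neg by blast
  qed
  show "t \<otimes> a \<in> ?K" if t: "t \<in> carrier R" and a: "a \<in> ?K" for t a
  proof -
    obtain i s where i_s: "i \<in> I" "s \<in> carrier R" and "a = i \<oplus> s \<otimes> x" using a by auto
    then have "t \<otimes> a = t \<otimes> i \<oplus> (t \<otimes> s) \<otimes> x"
      using x I_carrier t by (simp add: r_distr m_assoc subsetD)
    then show ?thesis using i_s t I left_ideal_mult by blast
  qed
qed

lemma jacobson_radical_imp_left_invertible:
  assumes x: "x \<in> jacobson_radical R" and r: "r \<in> carrier R"
  shows "\<exists>u\<in>carrier R. u \<otimes> (\<one> \<oplus> r \<otimes> x) = \<one>"
proof (rule ccontr)
  assume not_invertible: "\<not> ?thesis"
  have x_carrier: "x \<in> carrier R" using x by (simp add: jacobson_radical_def)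
  define y where "y = \<one> \<oplus> r \<otimes> x"
  have y_carrier: "y \<in> carrier R" using x_carrier r y_def by simp
  let ?L = "{s \<otimes> y | s. s \<in> carrier R}"
  have "\<one> \<notin> ?L" using not_invertible y_def by auto
  then obtain L where L: "maximal_left_ideal L R" and "?L \<subseteq> L"
    using exists_maximal_left_ideal left_ideal_principal[OF y_carrier] by blast
  then have ideal: "left_ideal L R" and "y \<in> L"
    using y_carrier by (auto simp: maximal_left_ideal_def intro!: exI[of _ \<one>])
  moreover have "r \<otimes> x \<in> L"
    using x L ideal r left_ideal_mult by (auto simp: jacobson_radical_def)
  ultimately have "y \<oplus> \<ominus> (r \<otimes> x) \<in> L" using left_ideal_add left_ideal_neg by blast
  moreover have "y \<oplus> \<ominus> (r \<otimes> x) = \<one>"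
    unfolding y_def using r x_carrier by (simp add: a_assoc r_neg)
  ultimately show False
    using L left_ideal_eq_carrier_if_one by (auto simp: maximal_left_ideal_def)
qed

lemma left_invertible_imp_jacobson_radical:
  assumes x: "x \<in> carrier R"
    and invertible: "\<forall>r\<in>carrier R. \<exists>u\<in>carrier R. u \<otimes> (\<one> \<oplus> r \<otimes> x) = \<one>"
  shows "x \<in> jacobson_radical R"
  unfolding jacobson_radical_def
proof (intro IntI x InterI, safe)
  fix L assume "maximal_left_ideal L R"
  then have L: "left_ideal L R" and proper: "L \<noteq> carrier R"
    and maximal: "\<And>J. left_ideal J R \<Longrightarrow> L \<subseteq> J \<Longrightarrow> J = L \<or> J = carrier R"
    by (auto simp: maximal_left_ideal_def)
  have L_carrier: "L \<subseteq> carrier R" using L by (rule left_ideal_carrier)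
  let ?K = "{i \<oplus> s \<otimes> x | i s. i \<in> L \<and> s \<in> carrier R}"
  show "x \<in> L"
  proof (rule ccontr)
    assume "x \<notin> L"
    moreover have "x \<in> ?K"
    proof -
      have "x = \<zero> \<oplus> \<one> \<otimes> x" using x by simp
      then show ?thesis using L left_ideal_zero by blast
    qed
    moreover have "L \<subseteq> ?K"
    proof
      fix i assume "i \<in> L"
      moreover have "i = i \<oplus> \<zero> \<otimes> x" using \<open>i \<in> L\<close> x L_carrier by auto
      ultimately show "i \<in> ?K" by blast
    qed
    ultimately have "?K = carrier R" using maximal left_ideal_add_principal[OF L x] by blast
    then have "\<one> \<in> ?K" by simp
    then obtain i s where i: "i \<in> L" and s: "s \<in> carrier R" and one: "\<one> = i \<oplus> s \<otimes> x"
      by blast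
    have "i = \<one> \<oplus> (\<ominus> s) \<otimes> x"
      using one i s x L_carrier by (simp add: l_minus a_assoc r_neg subsetD)
    then obtain u where "u \<in> carrier R" "u \<otimes> i = \<one>" using invertible s by (metis a_inv_closed)
    then have "\<one> \<in> L" using L left_ideal_mult i by metis
    then show False using proper L left_ideal_eq_carrier_if_one by blast
  qed
qed

lemma jacobson_radical_iff_left_invertible:
  "x \<in> jacobson_radical R \<longleftrightarrow>
     x \<in> carrier R \<and> (\<forall>r\<in>carrier R. \<exists>u\<in>carrier R. u \<otimes> (\<one> \<oplus> r \<otimes> x) = \<one>)"
  using jacobson_radical_imp_left_invertible left_invertible_imp_jacobson_radical
  by (auto simp: jacobson_radical_def)

lemma zero_in_nilpotents: "\<zero> \<in> nilpotents R"
  unfolding nilpotents_def by (auto intro!: exI[of _ "1::nat"])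

end

locale formal_triangular =
  fixes R1 :: "('a, 'c) ring_scheme" and M :: "('m, 'd) ring_scheme"
    and R2 :: "('b, 'e) ring_scheme"
    and l :: "'a \<Rightarrow> 'm \<Rightarrow> 'm" and r :: "'m \<Rightarrow> 'b \<Rightarrow> 'm"
  assumes bimodule: "bimodule R1 M R2 l r"
begin

sublocale R1: ring R1 using bimodule by (simp add: bimodule_def)
sublocale R2: ring R2 using bimodule by (simp add: bimodule_def)
sublocale M: abelian_group M using bimodule by (simp add: bimodule_def)

lemma l_closed[simp]: "x \<in> carrier R1 \<Longrightarrow> m \<in> carrier M \<Longrightarrow> l x m \<in> carrier M"
  and r_closed[simp]: "m \<in> carrier M \<Longrightarrow> y \<in> carrier R2 \<Longrightarrow> r m y \<in> carrier M"
  and l_add: "x \<in> carrier R1 \<Longrightarrow> m \<in> carrier M \<Longrightarrow> n \<in> carrier M \<Longrightarrow>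
    l x (m \<oplus>\<^bsub>M\<^esub> n) = l x m \<oplus>\<^bsub>M\<^esub> l x n"
  and add_l: "x \<in> carrier R1 \<Longrightarrow> x' \<in> carrier R1 \<Longrightarrow> m \<in> carrier M \<Longrightarrow>
    l (x \<oplus>\<^bsub>R1\<^esub> x') m = l x m \<oplus>\<^bsub>M\<^esub> l x' m"
  and mult_l: "x \<in> carrier R1 \<Longrightarrow> x' \<in> carrier R1 \<Longrightarrow> m \<in> carrier M \<Longrightarrow>
    l (x \<otimes>\<^bsub>R1\<^esub> x') m = l x (l x' m)"
  and one_l[simp]: "m \<in> carrier M \<Longrightarrow> l \<one>\<^bsub>R1\<^esub> m = m"
  and r_add: "m \<in> carrier M \<Longrightarrow> n \<in> carrier M \<Longrightarrow> y \<in> carrier R2 \<Longrightarrow>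
    r (m \<oplus>\<^bsub>M\<^esub> n) y = r m y \<oplus>\<^bsub>M\<^esub> r n y"
  and add_r: "m \<in> carrier M \<Longrightarrow> y \<in> carrier R2 \<Longrightarrow> y' \<in> carrier R2 \<Longrightarrow>
    r m (y \<oplus>\<^bsub>R2\<^esub> y') = r m y \<oplus>\<^bsub>M\<^esub> r m y'"
  and mult_r: "m \<in> carrier M \<Longrightarrow> y \<in> carrier R2 \<Longrightarrow> y' \<in> carrier R2 \<Longrightarrow>
    r m (y \<otimes>\<^bsub>R2\<^esub> y') = r (r m y) y'"
  and one_r[simp]: "m \<in> carrier M \<Longrightarrow> r m \<one>\<^bsub>R2\<^esub> = m"
  and l_r_assoc: "x \<in> carrier R1 \<Longrightarrow> m \<in> carrier M \<Longrightarrow> y \<in> carrier R2 \<Longrightarrow>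
    r (l x m) y = l x (r m y)"
  using bimodule unfolding bimodule_def by auto

lemma l_zero[simp]: "x \<in> carrier R1 \<Longrightarrow> l x \<zero>\<^bsub>M\<^esub> = \<zero>\<^bsub>M\<^esub>"
  using l_add[of x "\<zero>\<^bsub>M\<^esub>" "\<zero>\<^bsub>M\<^esub>"] by simp

lemma r_zero[simp]: "y \<in> carrier R2 \<Longrightarrow> r \<zero>\<^bsub>M\<^esub> y = \<zero>\<^bsub>M\<^esub>"
  using r_add[of "\<zero>\<^bsub>M\<^esub>" "\<zero>\<^bsub>M\<^esub>" y] by simp

lemma zero_l[simp]: "m \<in> carrier M \<Longrightarrow> l \<zero>\<^bsub>R1\<^esub> m = \<zero>\<^bsub>M\<^esub>"
  using add_l[of "\<zero>\<^bsub>R1\<^esub>" "\<zero>\<^bsub>R1\<^esub>" m] by simp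

lemma zero_r[simp]: "m \<in> carrier M \<Longrightarrow> r m \<zero>\<^bsub>R2\<^esub> = \<zero>\<^bsub>M\<^esub>"
  using add_r[of m "\<zero>\<^bsub>R2\<^esub>" "\<zero>\<^bsub>R2\<^esub>"] by simp

abbreviation T where "T \<equiv> tri_ring R1 M R2 l r"

lemma T_carrier: "carrier T = carrier R1 \<times> carrier M \<times> carrier R2"
  and T_mult: "(a, m, b) \<otimes>\<^bsub>T\<^esub> (a', m', b') = (a \<otimes>\<^bsub>R1\<^esub> a', l a m' \<oplus>\<^bsub>M\<^esub> r m b', b \<otimes>\<^bsub>R2\<^esub> b')"
  and T_one: "\<one>\<^bsub>T\<^esub> = (\<one>\<^bsub>R1\<^esub>, \<zero>\<^bsub>M\<^esub>, \<one>\<^bsub>R2\<^esub>)"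
  and T_zero: "\<zero>\<^bsub>T\<^esub> = (\<zero>\<^bsub>R1\<^esub>, \<zero>\<^bsub>M\<^esub>, \<zero>\<^bsub>R2\<^esub>)"
  and T_add: "(a, m, b) \<oplus>\<^bsub>T\<^esub> (a', m', b') = (a \<oplus>\<^bsub>R1\<^esub> a', m \<oplus>\<^bsub>M\<^esub> m', b \<oplus>\<^bsub>R2\<^esub> b')"
  by (simp_all add: tri_ring_def)

lemma ring_T: "ring T"
proof (rule ringI)
  show "abelian_group T"
  proof (rule abelian_groupI)
    show "\<exists>y\<in>carrier T. y \<oplus>\<^bsub>T\<^esub> x = \<zero>\<^bsub>T\<^esub>" if "x \<in> carrier T" for x
      using that
      by (auto simp: T_carrier T_add T_zero intro!: bexI[of _ "(\<ominus>\<^bsub>R1\<^esub> _, \<ominus>\<^bsub>M\<^esub> _, \<ominus>\<^bsub>R2\<^esub> _)"])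
  qed (auto simp: T_carrier T_add T_zero R1.a_ac R2.a_ac M.a_ac)
  show "monoid T"
    by (rule monoidI)
      (auto simp: T_carrier T_mult T_one R1.m_assoc R2.m_assoc M.a_assoc
        l_add r_add mult_l mult_r l_r_assoc)
qed (auto simp: T_carrier T_mult T_add R1.l_distr R2.l_distr R1.r_distr R2.r_distr
    l_add add_l r_add add_r M.a_ac)

sublocale T: ring T by (rule ring_T)

lemma fst_T_ops[simp]:
  "fst (A \<otimes>\<^bsub>T\<^esub> B) = fst A \<otimes>\<^bsub>R1\<^esub> fst B"
  "fst (A \<oplus>\<^bsub>T\<^esub> B) = fst A \<oplus>\<^bsub>R1\<^esub> fst B"
  "fst (\<one>\<^bsub>T\<^esub>) = \<one>\<^bsub>R1\<^esub>" "fst (\<zero>\<^bsub>T\<^esub>) = \<zero>\<^bsub>R1\<^esub>"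
  by (cases A rule: prod_cases3; cases B rule: prod_cases3; simp add: T_mult T_add T_one T_zero)+

lemma snd_snd_T_ops[simp]:
  "snd (snd (A \<otimes>\<^bsub>T\<^esub> B)) = snd (snd A) \<otimes>\<^bsub>R2\<^esub> snd (snd B)"
  "snd (snd (A \<oplus>\<^bsub>T\<^esub> B)) = snd (snd A) \<oplus>\<^bsub>R2\<^esub> snd (snd B)"
  "snd (snd (\<one>\<^bsub>T\<^esub>)) = \<one>\<^bsub>R2\<^esub>" "snd (snd (\<zero>\<^bsub>T\<^esub>)) = \<zero>\<^bsub>R2\<^esub>"
  by (cases A rule: prod_cases3; cases B rule: prod_cases3; simp add: T_mult T_add T_one T_zero)+

lemma diagonal_T_pow:
  "fst (A [^]\<^bsub>T\<^esub> (n::nat)) = fst A [^]\<^bsub>R1\<^esub> n"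
  "snd (snd (A [^]\<^bsub>T\<^esub> (n::nat))) = snd (snd A) [^]\<^bsub>R2\<^esub> n"
  by (induction n) simp_all

lemma T_mult_eq_zero_if_corner_zero:
  assumes "A \<in> carrier T" "B \<in> carrier T" "fst A = \<zero>\<^bsub>R1\<^esub>" "snd (snd B) = \<zero>\<^bsub>R2\<^esub>"
  shows "A \<otimes>\<^bsub>T\<^esub> B = \<zero>\<^bsub>T\<^esub>"
  using assms by (cases A rule: prod_cases3; cases B rule: prod_cases3)
    (simp add: T_carrier T_mult T_zero)

lemma nilpotents_T_iff:
  assumes A: "A \<in> carrier T"
  shows "A \<in> nilpotents T \<longleftrightarrow> fst A \<in> nilpotents R1 \<and> snd (snd A) \<in> nilpotents R2"
proof
  assume "A \<in> nilpotents T"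
  then obtain n where "A [^]\<^bsub>T\<^esub> (n::nat) = \<zero>\<^bsub>T\<^esub>" by (auto simp: nilpotents_def)
  then have "fst A [^]\<^bsub>R1\<^esub> n = \<zero>\<^bsub>R1\<^esub>" "snd (snd A) [^]\<^bsub>R2\<^esub> n = \<zero>\<^bsub>R2\<^esub>"
    by (simp_all flip: diagonal_T_pow)
  then show "fst A \<in> nilpotents R1 \<and> snd (snd A) \<in> nilpotents R2"
    using A by (auto simp: nilpotents_def T_carrier)
next
  assume "fst A \<in> nilpotents R1 \<and> snd (snd A) \<in> nilpotents R2"
  then obtain p q where p: "fst A [^]\<^bsub>R1\<^esub> (p::nat) = \<zero>\<^bsub>R1\<^esub>"
    and q: "snd (snd A) [^]\<^bsub>R2\<^esub> (q::nat) = \<zero>\<^bsub>R2\<^esub>"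
    by (auto simp: nilpotents_def)
  have "A [^]\<^bsub>T\<^esub> (p + q) = A [^]\<^bsub>T\<^esub> p \<otimes>\<^bsub>T\<^esub> A [^]\<^bsub>T\<^esub> q"
    using A by (simp add: T.nat_pow_mult)
  also have "\<dots> = \<zero>\<^bsub>T\<^esub>"
    using A p q by (intro T_mult_eq_zero_if_corner_zero) (simp_all add: diagonal_T_pow)
  finally show "A \<in> nilpotents T" using A unfolding nilpotents_def by blast
qed

text \<open>The off-diagonal entry k of the left inverse (u, k, v) is chosen so that r k b cancels
  l u m, using v b = 1.\<close>

lemma T_left_invertible_if_diagonal_left_invertible:
  assumes A: "A \<in> carrier T"
    and u: "u \<in> carrier R1" "u \<otimes>\<^bsub>R1\<^esub> fst A = \<one>\<^bsub>R1\<^esub>"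
    and v: "v \<in> carrier R2" "v \<otimes>\<^bsub>R2\<^esub> snd (snd A) = \<one>\<^bsub>R2\<^esub>"
  shows "\<exists>U\<in>carrier T. U \<otimes>\<^bsub>T\<^esub> A = \<one>\<^bsub>T\<^esub>"
proof -
  obtain a m b where abm: "A = (a, m, b)" "a \<in> carrier R1" "m \<in> carrier M" "b \<in> carrier R2"
    using A by (auto simp: T_carrier)
  define k where "k = r (\<ominus>\<^bsub>M\<^esub> l u m) v"
  have "r k b = \<ominus>\<^bsub>M\<^esub> l u m"
    using abm u v by (simp add: k_def mult_r[symmetric])
  then have "(u, k, v) \<otimes>\<^bsub>T\<^esub> A = \<one>\<^bsub>T\<^esub>"
    using abm u v by (simp add: T_mult T_one M.r_neg)
  moreover have "(u, k, v) \<in> carrier T" using abm u v by (simp add: k_def T_carrier)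
  ultimately show ?thesis by blast
qed

lemma jacobson_radical_T_iff:
  "A \<in> jacobson_radical T \<longleftrightarrow>
     A \<in> carrier T \<and> fst A \<in> jacobson_radical R1 \<and> snd (snd A) \<in> jacobson_radical R2"
proof
  assume J: "A \<in> jacobson_radical T"
  then have A: "A \<in> carrier T" by (simp add: jacobson_radical_def)
  have inv: "\<exists>U\<in>carrier T. U \<otimes>\<^bsub>T\<^esub> (\<one>\<^bsub>T\<^esub> \<oplus>\<^bsub>T\<^esub> B \<otimes>\<^bsub>T\<^esub> A) = \<one>\<^bsub>T\<^esub>"
    if "B \<in> carrier T" for B
    using J that T.jacobson_radical_iff_left_invertible by blast
  have "\<exists>u\<in>carrier R1. u \<otimes>\<^bsub>R1\<^esub> (\<one>\<^bsub>R1\<^esub> \<oplus>\<^bsub>R1\<^esub> x \<otimes>\<^bsub>R1\<^esub> fst A) = \<one>\<^bsub>R1\<^esub>"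
    if "x \<in> carrier R1" for x
  proof -
    have "(x, \<zero>\<^bsub>M\<^esub>, \<zero>\<^bsub>R2\<^esub>) \<in> carrier T" using that by (simp add: T_carrier)
    then obtain U where U: "U \<in> carrier T"
      and "U \<otimes>\<^bsub>T\<^esub> (\<one>\<^bsub>T\<^esub> \<oplus>\<^bsub>T\<^esub> (x, \<zero>\<^bsub>M\<^esub>, \<zero>\<^bsub>R2\<^esub>) \<otimes>\<^bsub>T\<^esub> A) = \<one>\<^bsub>T\<^esub>"
      using inv by blast
    then have "fst U \<otimes>\<^bsub>R1\<^esub> (\<one>\<^bsub>R1\<^esub> \<oplus>\<^bsub>R1\<^esub> x \<otimes>\<^bsub>R1\<^esub> fst A) = \<one>\<^bsub>R1\<^esub>"
      by (metis fst_T_ops(1-3) fst_conv)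
    moreover have "fst U \<in> carrier R1" using U by (auto simp: T_carrier)
    ultimately show ?thesis by blast
  qed
  moreover have "\<exists>v\<in>carrier R2. v \<otimes>\<^bsub>R2\<^esub> (\<one>\<^bsub>R2\<^esub> \<oplus>\<^bsub>R2\<^esub> y \<otimes>\<^bsub>R2\<^esub> snd (snd A)) = \<one>\<^bsub>R2\<^esub>"
    if "y \<in> carrier R2" for y
  proof -
    have "(\<zero>\<^bsub>R1\<^esub>, \<zero>\<^bsub>M\<^esub>, y) \<in> carrier T" using that by (simp add: T_carrier)
    then obtain U where U: "U \<in> carrier T"
      and "U \<otimes>\<^bsub>T\<^esub> (\<one>\<^bsub>T\<^esub> \<oplus>\<^bsub>T\<^esub> (\<zero>\<^bsub>R1\<^esub>, \<zero>\<^bsub>M\<^esub>, y) \<otimes>\<^bsub>T\<^esub> A) = \<one>\<^bsub>T\<^esub>"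
      using inv by blast
    then have "snd (snd U) \<otimes>\<^bsub>R2\<^esub> (\<one>\<^bsub>R2\<^esub> \<oplus>\<^bsub>R2\<^esub> y \<otimes>\<^bsub>R2\<^esub> snd (snd A)) = \<one>\<^bsub>R2\<^esub>"
      by (metis snd_snd_T_ops(1-3) snd_conv)
    moreover have "snd (snd U) \<in> carrier R2" using U by (auto simp: T_carrier)
    ultimately show ?thesis by blast
  qed
  ultimately show "A \<in> carrier T \<and> fst A \<in> jacobson_radical R1 \<and> snd (snd A) \<in> jacobson_radical R2"
    using A by (auto simp: T_carrier R1.jacobson_radical_iff_left_invertible
        R2.jacobson_radical_iff_left_invertible)
next
  assume diag: "A \<in> carrier T \<and> fst A \<in> jacobson_radical R1 \<and> snd (snd A) \<in> jacobson_radical R2"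
  have "\<exists>U\<in>carrier T. U \<otimes>\<^bsub>T\<^esub> (\<one>\<^bsub>T\<^esub> \<oplus>\<^bsub>T\<^esub> B \<otimes>\<^bsub>T\<^esub> A) = \<one>\<^bsub>T\<^esub>"
    if B: "B \<in> carrier T" for B
  proof -
    obtain u where "u \<in> carrier R1" "u \<otimes>\<^bsub>R1\<^esub> (\<one>\<^bsub>R1\<^esub> \<oplus>\<^bsub>R1\<^esub> fst B \<otimes>\<^bsub>R1\<^esub> fst A) = \<one>\<^bsub>R1\<^esub>"
      using diag B R1.jacobson_radical_iff_left_invertible by (auto simp: T_carrier)
    moreover obtain v where "v \<in> carrier R2"
      "v \<otimes>\<^bsub>R2\<^esub> (\<one>\<^bsub>R2\<^esub> \<oplus>\<^bsub>R2\<^esub> snd (snd B) \<otimes>\<^bsub>R2\<^esub> snd (snd A)) = \<one>\<^bsub>R2\<^esub>"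
      using diag B R2.jacobson_radical_iff_left_invertible by (auto simp: T_carrier)
    ultimately show ?thesis
      using diag B by (intro T_left_invertible_if_diagonal_left_invertible) simp_all
  qed
  then show "A \<in> jacobson_radical T"
    using diag T.jacobson_radical_iff_left_invertible by blast
qed

lemma NJ_symmetric_R1_if_NJ_symmetric_T:
  assumes "NJ_symmetric T"
  shows "NJ_symmetric R1"
  unfolding NJ_symmetric_def
proof (intro ballI impI)
  fix a b c assume abc: "a \<in> carrier R1" "b \<in> carrier R1" "c \<in> carrier R1"
    and nil: "a \<otimes>\<^bsub>R1\<^esub> b \<otimes>\<^bsub>R1\<^esub> c \<in> nilpotents R1"
  let ?e = "\<lambda>x. (x, \<zero>\<^bsub>M\<^esub>, \<zero>\<^bsub>R2\<^esub>)"
  have e: "?e a \<in> carrier T" "?e b \<in> carrier T" "?e c \<in> carrier T"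
    using abc by (auto simp: T_carrier)
  then have "?e a \<otimes>\<^bsub>T\<^esub> ?e b \<otimes>\<^bsub>T\<^esub> ?e c \<in> nilpotents T"
    using nil by (simp add: nilpotents_T_iff R2.zero_in_nilpotents)
  then have "?e b \<otimes>\<^bsub>T\<^esub> ?e a \<otimes>\<^bsub>T\<^esub> ?e c \<in> jacobson_radical T"
    using assms e unfolding NJ_symmetric_def by blast
  then show "b \<otimes>\<^bsub>R1\<^esub> a \<otimes>\<^bsub>R1\<^esub> c \<in> jacobson_radical R1"
    by (simp add: jacobson_radical_T_iff)
qed

lemma NJ_symmetric_R2_if_NJ_symmetric_T:
  assumes "NJ_symmetric T"
  shows "NJ_symmetric R2"
  unfolding NJ_symmetric_def
proof (intro ballI impI)
  fix a b c assume abc: "a \<in> carrier R2" "b \<in> carrier R2" "c \<in> carrier R2"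
    and nil: "a \<otimes>\<^bsub>R2\<^esub> b \<otimes>\<^bsub>R2\<^esub> c \<in> nilpotents R2"
  let ?e = "\<lambda>y. (\<zero>\<^bsub>R1\<^esub>, \<zero>\<^bsub>M\<^esub>, y)"
  have e: "?e a \<in> carrier T" "?e b \<in> carrier T" "?e c \<in> carrier T"
    using abc by (auto simp: T_carrier)
  then have "?e a \<otimes>\<^bsub>T\<^esub> ?e b \<otimes>\<^bsub>T\<^esub> ?e c \<in> nilpotents T"
    using nil by (simp add: nilpotents_T_iff R1.zero_in_nilpotents)
  then have "?e b \<otimes>\<^bsub>T\<^esub> ?e a \<otimes>\<^bsub>T\<^esub> ?e c \<in> jacobson_radical T"
    using assms e unfolding NJ_symmetric_def by blast
  then show "b \<otimes>\<^bsub>R2\<^esub> a \<otimes>\<^bsub>R2\<^esub> c \<in> jacobson_radical R2"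
    by (simp add: jacobson_radical_T_iff)
qed

lemma NJ_symmetric_T_if_NJ_symmetric_R1_R2:
  assumes "NJ_symmetric R1" "NJ_symmetric R2"
  shows "NJ_symmetric T"
  unfolding NJ_symmetric_def
proof (intro ballI impI)
  fix A B C assume ABC: "A \<in> carrier T" "B \<in> carrier T" "C \<in> carrier T"
    and "A \<otimes>\<^bsub>T\<^esub> B \<otimes>\<^bsub>T\<^esub> C \<in> nilpotents T"
  then have "fst A \<otimes>\<^bsub>R1\<^esub> fst B \<otimes>\<^bsub>R1\<^esub> fst C \<in> nilpotents R1"
    "snd (snd A) \<otimes>\<^bsub>R2\<^esub> snd (snd B) \<otimes>\<^bsub>R2\<^esub> snd (snd C) \<in> nilpotents R2"
    by (simp_all add: nilpotents_T_iff)
  moreover have "fst A \<in> carrier R1" "fst B \<in> carrier R1" "fst C \<in> carrier R1"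
    "snd (snd A) \<in> carrier R2" "snd (snd B) \<in> carrier R2" "snd (snd C) \<in> carrier R2"
    using ABC by (auto simp: T_carrier)
  ultimately have "fst B \<otimes>\<^bsub>R1\<^esub> fst A \<otimes>\<^bsub>R1\<^esub> fst C \<in> jacobson_radical R1"
    "snd (snd B) \<otimes>\<^bsub>R2\<^esub> snd (snd A) \<otimes>\<^bsub>R2\<^esub> snd (snd C) \<in> jacobson_radical R2"
    using assms unfolding NJ_symmetric_def by blast+
  then show "B \<otimes>\<^bsub>T\<^esub> A \<otimes>\<^bsub>T\<^esub> C \<in> jacobson_radical T"
    using ABC by (simp add: jacobson_radical_T_iff)
qed

end

theorem corollary2p22:
  fixes R1 :: "('a, 'c) ring_scheme" and M :: "('m, 'd) ring_scheme"
    and R2 :: "('b, 'e) ring_scheme"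
    and l :: "'a \<Rightarrow> 'm \<Rightarrow> 'm" and r :: "'m \<Rightarrow> 'b \<Rightarrow> 'm"
  assumes "ring R1" and "ring R2" and "bimodule R1 M R2 l r"
  shows "NJ_symmetric (tri_ring R1 M R2 l r) \<longleftrightarrow> NJ_symmetric R1 \<and> NJ_symmetric R2"
proof -
  \<comment> \<open>The hypotheses ring R1 and ring R2 are already part of bimodule.\<close>
  interpret formal_triangular R1 M R2 l r using assms(3) by (rule formal_triangular.intro)
  show ?thesis
    using NJ_symmetric_R1_if_NJ_symmetric_T NJ_symmetric_R2_if_NJ_symmetric_T
      NJ_symmetric_T_if_NJ_symmetric_R1_R2 by blast
qed

end
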